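(* Let $\mathcal{L}:\mathbb{R}^d\to\mathbb{R}$ be differentiable with $\nabla\mathcal{L}$ Lipschitz continuous with constant $L$. Run full-batch MoFO with $\beta_1<\sqrt{\beta_2}<1$, $\epsilon=0$ and learning rates $\eta_t=\eta/\sqrt t$ ($\eta>0$). Then for every iteration $t\ge1$, $$\left\|\frac{m_t}{1-\beta_1^t}-g_t\right\|_1\le\frac{2\sqrt2\,\beta_1\sqrt d\,LC\eta}{(1-\beta_1)^2\sqrt t},$$ where $C=\dfrac{\sqrt{d\cdot(\alpha\%)+B}}{\sqrt{1-\beta_2}\,(1-\beta_1/\sqrt{\beta_2})}$.
   Context: The coordinates of $\mathbb{R}^d$ are partitioned into $B$ blocks of sizes $d_1,\dots,d_B$ with $\sum_kd_k=d$. Fix $\alpha\%\in(0,1]$. For $z\in\mathbb{R}^d$, $\texttt{FLT}_\alpha(z)\in\{0,1\}^d$ equals, in each block $k$, $1$ exactly on a set of $\lceil d_k\cdot\alpha\%\rceil$ indices with the largest absolute values of $z$ within that block (ties broken in favour of smaller indices), and $0$ elsewhere. Full-batch MoFO with $\beta_1,\beta_2\in(0,1)$, learning rates $\eta_t>0$, initial point $\theta_0$: $m_0=v_0=0$; for $t\ge1$, $g_t=\nabla\mathcal{L}(\theta_{t-1})$, $m_t=\beta_1m_{t-1}+(1-\beta_1)g_t$, $v_t=\beta_2v_{t-1}+(1-\beta_2)g_t\odot g_t$, $\hat m_t=m_t/(1-\beta_1^t)$, $\hat v_t=v_t/(1-\beta_2^t)$, $\theta_t=\theta_{t-1}-\eta_t(\hat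 m_t\odot\texttt{FLT}_\alpha(m_t))/\sqrt{\hat v_t}$ entrywise ($\epsilon=0$: no additive constant in the denominator; a quotient with $\hat v_{i,t}=0$ is taken as $0$). *)

theory Defs
  imports "HOL-Analysis.Analysis"
begin

text \<open>Coordinates are indexed by a finite linearly ordered type 'n (so d = CARD('n));
  the linear order is used for tie-breaking.  A block structure with B blocks is a
  map blk assigning to each coordinate its block number (< B).\<close>

definition block_of :: "('n \<Rightarrow> nat) \<Rightarrow> 'n \<Rightarrow> 'n set" where
  "block_of blk i = {j. blk j = blk i}"

text \<open>FLT_alpha(z): in every block, 1 exactly on the ceil(d_k * alpha) indices that come first
  in the strict order "larger |z_j|, ties broken by smaller index", 0 elsewhere.\<close>
definition flt :: "real \<Rightarrow> ('n \<Rightarrow> nat) \<Rightarrow> (real, 'n::{finite,linorder}) vec \<Rightarrow> (real, 'n) vec" where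
  "flt \<alpha> blk z = (\<chi> i.
     if int (card {j \<in> block_of blk i. \<bar>z$j\<bar> > \<bar>z$i\<bar> \<or> (\<bar>z$j\<bar> = \<bar>z$i\<bar> \<and> j < i)})
          < \<lceil>real (card (block_of blk i)) * \<alpha>\<rceil>
     then 1 else 0)"

text \<open>Full-batch MoFO with epsilon = 0.  State after t steps: (theta_t, m_t, v_t).
  G is the gradient, eta the learning-rate sequence (eta t = eta_t).\<close>
fun mofo :: "((real, 'n::{finite,linorder}) vec \<Rightarrow> (real, 'n) vec) \<Rightarrow> real \<Rightarrow> ('n \<Rightarrow> nat) \<Rightarrow> real \<Rightarrow> real
      \<Rightarrow> (nat \<Rightarrow> real) \<Rightarrow> (real, 'n) vec \<Rightarrow> nat \<Rightarrow> (real, 'n) vec \<times> (real, 'n) vec \<times> (real, 'n) vec" where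
  "mofo G \<alpha> blk \<beta>1 \<beta>2 \<eta> \<theta>0 0 = (\<theta>0, 0, 0)"
| "mofo G \<alpha> blk \<beta>1 \<beta>2 \<eta> \<theta>0 (Suc t) =
     (let (\<theta>, m, v) = mofo G \<alpha> blk \<beta>1 \<beta>2 \<eta> \<theta>0 t;
          g = G \<theta>;
          m' = \<beta>1 *\<^sub>R m + (1 - \<beta>1) *\<^sub>R g;
          v' = \<beta>2 *\<^sub>R v + (1 - \<beta>2) *\<^sub>R (\<chi> i. (g$i) * (g$i));
          mh = (1 / (1 - \<beta>1 ^ Suc t)) *\<^sub>R m';
          vh = (1 / (1 - \<beta>2 ^ Suc t)) *\<^sub>R v';
          mask = flt \<alpha> blk m';
          \<theta>' = (\<chi> i. \<theta>$i - \<eta> (Suc t) *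
                  (if vh$i = 0 then 0 else (mh$i * mask$i) / sqrt (vh$i)))
      in (\<theta>', m', v'))"

definition mofo_theta where "mofo_theta G \<alpha> blk \<beta>1 \<beta>2 \<eta> \<theta>0 t = fst (mofo G \<alpha> blk \<beta>1 \<beta>2 \<eta> \<theta>0 t)"
definition mofo_m where "mofo_m G \<alpha> blk \<beta>1 \<beta>2 \<eta> \<theta>0 t = fst (snd (mofo G \<alpha> blk \<beta>1 \<beta>2 \<eta> \<theta>0 t))"
definition mofo_v where "mofo_v G \<alpha> blk \<beta>1 \<beta>2 \<eta> \<theta>0 t = snd (snd (mofo G \<alpha> blk \<beta>1 \<beta>2 \<eta> \<theta>0 t))"

definition norm1 :: "(real, 'n::finite) vec \<Rightarrow> real" where
  "norm1 x = (\<Sum>i\<in>UNIV. \<bar>x$i\<bar>)"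

end

theory Submission
  imports Defs
begin

(*
  Cauchy-Schwarz with weights (beta1/sqrt beta2)^j bounds every bias-corrected ratio
  m_hat_i/sqrt v_hat_i by 1/(sqrt(1 - beta2) (1 - beta1/sqrt beta2)), and the filter keeps at
  most d alpha + B coordinates, so the t-th MoFO step has Euclidean length at most eta_t C.
  Hence theta_{t-1-j} lies within j (j+1) eta C/sqrt t of theta_{t-1}.  Since m_hat_t - g_t is a
  normalised beta1-weighted average of the differences g_{t-j} - g_t, the Lipschitz bound and
  sum_j j (j+1) beta1^j <= 2 beta1/(1 - beta1)^3 give the Euclidean bound
  2 beta1 L C eta/((1 - beta1)^2 sqrt t); the l1 norm costs a factor sqrt d.
*)

lemma card_rank_less_le:
  assumes "finite A" "strict_linear_order_on A r"
  shows "card {x \<in> A. card {y \<in> A. (y, x) \<in> r} < k} \<le> k"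
proof -
  define rank where "rank x = card {y \<in> A. (y, x) \<in> r}" for x
  have "trans r" "irrefl r" "total_on A r"
    using assms(2) unfolding strict_linear_order_on_def by simp_all
  have rank_less: "rank x < rank y" if "(x, y) \<in> r" "x \<in> A" for x y
    unfolding rank_def
  proof (rule psubset_card_mono)
    have "{z \<in> A. (z, x) \<in> r} \<subseteq> {z \<in> A. (z, y) \<in> r}"
      using transD[OF \<open>trans r\<close> _ that(1)] by blast
    moreover have "x \<in> {z \<in> A. (z, y) \<in> r}" "x \<notin> {z \<in> A. (z, x) \<in> r}"
      using that irreflD[OF \<open>irrefl r\<close>] by simp_all
    ultimately show "{z \<in> A. (z, x) \<in> r} \<subset> {z \<in> A. (z, y) \<in> r}" by blast
  qed (use assms(1) in simp)
  have "inj_on rank A"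
  proof (rule inj_onI, rule ccontr)
    fix x y assume "x \<in> A" "y \<in> A" "rank x = rank y" "x \<noteq> y"
    with \<open>total_on A r\<close> have "(x, y) \<in> r \<or> (y, x) \<in> r"
      unfolding total_on_def by blast
    then show False
      using rank_less[of x y] rank_less[of y x] \<open>x \<in> A\<close> \<open>y \<in> A\<close> \<open>rank x = rank y\<close> by linarith
  qed
  then have "inj_on rank {x \<in> A. rank x < k}"
    by (rule inj_on_subset) blast
  moreover have "rank ` {x \<in> A. rank x < k} \<subseteq> {..<k}" by blast
  ultimately have "card {x \<in> A. rank x < k} \<le> card {..<k}"
    by (rule card_inj_on_le) simp
  then show ?thesis unfolding rank_def by simp
qed

lemma card_flt_nonzero_le:
  fixes z :: "(real, 'n::{finite,linorder}) vec"
  assumes blocks: "\<And>i. blk i < B" and "0 \<le> \<alpha>"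
  shows "real (card {i. flt \<alpha> blk z $ i \<noteq> 0}) \<le> real CARD('n) * \<alpha> + real B"
proof -
  define r where "r = {(j, i). \<bar>z$j\<bar> > \<bar>z$i\<bar> \<or> (\<bar>z$j\<bar> = \<bar>z$i\<bar> \<and> j < i)}"
  define A where "A k = {i. blk i = k}" for k
  define S where "S k = {i \<in> A k. card {j \<in> A k. (j, i) \<in> r} < nat \<lceil>real (card (A k)) * \<alpha>\<rceil>}" for k
  have "{i. flt \<alpha> blk z $ i \<noteq> 0} = (\<Union>k<B. S k)"
    using blocks by (auto simp: flt_def S_def A_def block_of_def r_def zless_nat_eq_int_zless)
  then have "card {i. flt \<alpha> blk z $ i \<noteq> 0} \<le> (\<Sum>k<B. card (S k))"
    by (simp add: card_UN_le)
  then have "real (card {i. flt \<alpha> blk z $ i \<noteq> 0}) \<le> (\<Sum>k<B. real (card (S k)))"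
    by (metis of_nat_le_iff of_nat_sum)
  also have "\<dots> \<le> (\<Sum>k<B. real (card (A k)) * \<alpha> + 1)"
  proof (rule sum_mono)
    fix k
    have "strict_linear_order_on (A k) r"
      unfolding strict_linear_order_on_def trans_def irrefl_def total_on_def r_def by auto
    then have "card (S k) \<le> nat \<lceil>real (card (A k)) * \<alpha>\<rceil>"
      unfolding S_def by (intro card_rank_less_le) auto
    moreover have "real (nat \<lceil>real (card (A k)) * \<alpha>\<rceil>) \<le> real (card (A k)) * \<alpha> + 1"
      using \<open>0 \<le> \<alpha>\<close> zero_le_mult_iff[of "real (card (A k))" \<alpha>] by linarith
    ultimately show "real (card (S k)) \<le> real (card (A k)) * \<alpha> + 1"
      by (meson of_nat_le_iff order_trans)
  qed
  also have "(\<Sum>k<B. real (card (A k))) = real CARD('n)"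
  proof -
    have "UNIV = (\<Union>k<B. A k)" using blocks by (auto simp: A_def)
    then have "CARD('n) = card (\<Union>k<B. A k)" by simp
    also have "\<dots> = (\<Sum>k<B. card (A k))"
      by (rule card_UN_disjoint) (auto simp: A_def)
    finally show ?thesis by simp
  qed
  ultimately show ?thesis by (simp add: sum.distrib sum_distrib_right[symmetric])
qed

lemma sum_power_le_inverse:
  fixes x :: real
  assumes "0 \<le> x" "x < 1"
  shows "(\<Sum>j<n. x ^ j) \<le> 1 / (1 - x)"
proof -
  have "(\<Sum>j<n. x ^ j) = (1 - x ^ n) / (1 - x)" using assms sum_gp_strict[of x n] by simp
  also have "\<dots> \<le> 1 / (1 - x)" using assms by (intro divide_right_mono) auto
  finally show ?thesis .
qed

lemma power_weighted_sum_sq_le: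
  fixes b1 b2 :: real and g :: "nat \<Rightarrow> real"
  assumes "0 \<le> b1" "b1 < sqrt b2"
  shows "(\<Sum>j<r. b1 ^ j * g j)\<^sup>2 \<le> (\<Sum>j<r. b2 ^ j * (g j)\<^sup>2) / (1 - b1 / sqrt b2)\<^sup>2"
proof -
  define \<gamma> where "\<gamma> = b1 / sqrt b2"
  define V where "V = (\<Sum>j<r. b2 ^ j * (g j)\<^sup>2)"
  have "0 < sqrt b2" using assms by linarith
  then have "0 < b2" by simp
  have \<gamma>: "0 \<le> \<gamma>" "\<gamma> < 1"
    unfolding \<gamma>_def using assms \<open>0 < sqrt b2\<close> by (simp_all add: divide_less_eq)
  have "0 \<le> V" unfolding V_def using \<open>0 < b2\<close> by (simp add: sum_nonneg)
  have "b1 ^ j * g j = \<gamma> ^ j * (sqrt b2 ^ j * g j)" for j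
    unfolding \<gamma>_def using \<open>0 < sqrt b2\<close> by (simp add: power_divide)
  then have "(\<Sum>j<r. b1 ^ j * g j)\<^sup>2 \<le> (\<Sum>j<r. (\<gamma> ^ j)\<^sup>2) * (\<Sum>j<r. (sqrt b2 ^ j * g j)\<^sup>2)"
    by (simp only:) (rule Cauchy_Schwarz_ineq_sum)
  also have "(\<Sum>j<r. (sqrt b2 ^ j * g j)\<^sup>2) = V"
    unfolding V_def using \<open>0 < b2\<close> by (simp add: power_mult_distrib real_sqrt_power[symmetric])
  also have "(\<Sum>j<r. (\<gamma> ^ j)\<^sup>2) * V \<le> 1 / (1 - \<gamma>)\<^sup>2 * V"
  proof (rule mult_right_mono[OF _ \<open>0 \<le> V\<close>])
    have "(\<Sum>j<r. (\<gamma> ^ j)\<^sup>2) \<le> (\<Sum>j<r. \<gamma> ^ j)"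
      using \<gamma> by (intro sum_mono) (simp add: power2_eq_square mult_left_le_one_le power_le_one)
    also have "\<dots> \<le> 1 / (1 - \<gamma>)" using sum_power_le_inverse \<gamma> by blast
    also have "\<dots> \<le> 1 / (1 - \<gamma>)\<^sup>2"
      using \<gamma> by (intro divide_left_mono) (auto simp: power2_eq_square mult_left_le_one_le)
    finally show "(\<Sum>j<r. (\<gamma> ^ j)\<^sup>2) \<le> 1 / (1 - \<gamma>)\<^sup>2" .
  qed
  finally show ?thesis unfolding \<gamma>_def V_def by simp
qed

lemma bias_corrected_moment_sq_le:
  fixes b1 b2 :: real and g :: "nat \<Rightarrow> real"
  assumes "0 \<le> b1" "b1 < sqrt b2" "b2 < 1" "1 \<le> r"
  shows "((1 - b1) / (1 - b1 ^ r) * (\<Sum>j<r. b1 ^ j * g j))\<^sup>2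
     \<le> (1 / (sqrt (1 - b2) * (1 - b1 / sqrt b2)))\<^sup>2 * ((1 - b2) / (1 - b2 ^ r) * (\<Sum>j<r. b2 ^ j * (g j)\<^sup>2))"
proof -
  define V where "V = (\<Sum>j<r. b2 ^ j * (g j)\<^sup>2)"
  have b2: "0 < b2" using assms(1,2) by (metis le_less_trans real_sqrt_le_0_iff not_le)
  have "sqrt b2 < 1" using assms(3) by simp
  then have "b1 < 1" using assms(2) by linarith
  have "V \<ge> 0" unfolding V_def using b2 by (simp add: sum_nonneg)
  have "b1 ^ r \<le> b1" using power_decreasing[of 1 r b1] assms(1,4) \<open>b1 < 1\<close> by simp
  then have "((1 - b1) / (1 - b1 ^ r))\<^sup>2 \<le> 1"
    using \<open>b1 < 1\<close> by (simp add: power_le_one)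
  have "0 < 1 - b2 ^ r" "1 - b2 ^ r \<le> 1"
    using assms(3,4) b2 by (simp_all add: power_less_one_iff)
  then have "1 \<le> 1 / (1 - b2 ^ r)" by simp
  have "((1 - b1) / (1 - b1 ^ r) * (\<Sum>j<r. b1 ^ j * g j))\<^sup>2
      \<le> (\<Sum>j<r. b1 ^ j * g j)\<^sup>2"
    unfolding power_mult_distrib
    by (rule mult_left_le_one_le[OF zero_le_power2 zero_le_power2 \<open>((1 - b1) / (1 - b1 ^ r))\<^sup>2 \<le> 1\<close>])
  also have "\<dots> \<le> V / (1 - b1 / sqrt b2)\<^sup>2"
    unfolding V_def using assms(1,2) by (rule power_weighted_sum_sq_le)
  also have "\<dots> \<le> (1 / (1 - b2 ^ r) * V) / (1 - b1 / sqrt b2)\<^sup>2"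
    using mult_right_mono[OF \<open>1 \<le> 1 / (1 - b2 ^ r)\<close> \<open>V \<ge> 0\<close>] by (intro divide_right_mono) simp_all
  also have "\<dots> = (1 / (sqrt (1 - b2) * (1 - b1 / sqrt b2)))\<^sup>2 * ((1 - b2) / (1 - b2 ^ r) * V)"
    using b2 assms(3) by (simp add: power_mult_distrib power_divide)
  finally show ?thesis unfolding V_def .
qed

lemma abs_masked_quotient_le:
  fixes mh vh s K :: real
  assumes "mh\<^sup>2 \<le> K\<^sup>2 * vh" "0 \<le> K"
  shows "\<bar>if vh = 0 then 0 else mh * s / sqrt vh\<bar> \<le> K * \<bar>s\<bar>"
proof (cases "mh = 0")
  case False
  then have "0 < mh\<^sup>2" by simp
  then have "0 < K\<^sup>2 * vh" using assms(1) by linarith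
  then have "0 < vh" using zero_less_mult_iff[of "K\<^sup>2" vh] by simp
  have mh: "\<bar>mh\<bar> \<le> K * sqrt vh"
    using real_sqrt_le_mono[OF assms(1)] assms(2) by (simp add: real_sqrt_mult)
  have "\<bar>mh\<bar> * \<bar>s\<bar> / sqrt vh \<le> K * \<bar>s\<bar>"
    using mult_right_mono[OF mh abs_ge_zero[of s]] \<open>0 < vh\<close> by (simp add: divide_le_eq mult_ac)
  then show ?thesis using \<open>0 < vh\<close> by (simp add: abs_mult)
qed (use assms in simp)

lemma norm_le_sqrt_card_nonzero:
  fixes x :: "(real, 'n::finite) vec"
  assumes "\<And>i. \<bar>x $ i\<bar> \<le> c"
  shows "norm x \<le> c * sqrt (card {i. x $ i \<noteq> 0})"
proof -
  define S where "S = {i. x $ i \<noteq> 0}"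
  have "0 \<le> c" using assms[of undefined] by simp
  have "norm x = sqrt (\<Sum>i\<in>S. (x $ i)\<^sup>2)"
    unfolding norm_vec_def L2_set_def S_def by (simp add: sum.mono_neutral_cong_right)
  also have "\<dots> \<le> sqrt (\<Sum>i\<in>S. c\<^sup>2)"
    using assms by (intro real_sqrt_le_mono sum_mono) (metis abs_ge_zero power2_abs power_mono)
  also have "\<dots> = c * sqrt (card S)"
    using \<open>0 \<le> c\<close> by (simp add: real_sqrt_mult)
  finally show ?thesis unfolding S_def .
qed

lemma norm1_le_sqrt_card_mult_norm:
  fixes x :: "(real, 'n::finite) vec"
  shows "norm1 x \<le> sqrt (real CARD('n)) * norm x"
proof -
  have "norm1 x \<le> L2_set (\<lambda>i. x $ i) UNIV * L2_set (\<lambda>i::'n. 1) UNIV"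
    using L2_set_mult_ineq[of "\<lambda>i. x $ i" "\<lambda>i::'n. 1::real" UNIV] unfolding norm1_def by simp
  then show ?thesis by (simp add: norm_vec_def L2_set_def L2_set_constant mult.commute)
qed

lemma pronic_power_sum_eq:
  fixes b :: real
  shows "(1 - b) ^ 3 * (\<Sum>j<t. real j * (real j + 1) * b ^ j)
     = 2 * b - b ^ t * (2 * b + 2 * real t * b * (1 - b) + real t * (real t + 1) * (1 - b)\<^sup>2)"
  by (induction t) (simp_all add: algebra_simps power2_eq_square power3_eq_cube)

lemma pronic_power_sum_le:
  fixes b :: real
  assumes "0 < b" "b < 1" "1 \<le> t"
  shows "(1 - b) / (1 - b ^ t) * (\<Sum>j<t. real j * (real j + 1) * b ^ j) \<le> 2 * b / (1 - b)\<^sup>2"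
proof -
  define S where "S = (\<Sum>j<t. real j * (real j + 1) * b ^ j)"
  have "0 < 1 - b ^ t" using assms by (simp add: power_less_one_iff)
  have "(1 - b) ^ 3 * S \<le> 2 * b - b ^ t * (2 * b)"
    unfolding S_def pronic_power_sum_eq using assms
    by (intro diff_left_mono mult_left_mono) (auto intro!: add_nonneg_nonneg mult_nonneg_nonneg)
  then have "(1 - b) ^ 3 * S \<le> 2 * b * (1 - b ^ t)" by (simp add: algebra_simps)
  then have "(1 - b) ^ 3 * S / (1 - b ^ t) \<le> 2 * b"
    using \<open>0 < 1 - b ^ t\<close> by (simp add: pos_divide_le_eq)
  moreover have eq: "(1 - b) * S * (1 - b)\<^sup>2 = (1 - b) ^ 3 * S"
    by (simp add: power2_eq_square power3_eq_cube mult_ac)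
  ultimately have "(1 - b) / (1 - b ^ t) * S * (1 - b)\<^sup>2 \<le> 2 * b"
    by (simp only: times_divide_eq_left eq)
  then show ?thesis
    unfolding S_def[symmetric] using assms(2) by (simp add: pos_le_divide_eq)
qed

lemma bias_corrected_ema_minus_head:
  fixes g :: "nat \<Rightarrow> 'a::real_vector" and b :: real
  assumes "b ^ t \<noteq> 1"
  shows "(1 / (1 - b ^ t)) *\<^sub>R ((1 - b) *\<^sub>R (\<Sum>j<t. b ^ j *\<^sub>R g j)) - g 0
    = ((1 - b) / (1 - b ^ t)) *\<^sub>R (\<Sum>j<t. b ^ j *\<^sub>R (g j - g 0))"
proof -
  define c where "c = (1 - b) / (1 - b ^ t)"
  define s where "s = (\<Sum>j<t. b ^ j)"
  have "(1 - b) * s = 1 - b ^ t" unfolding s_def by (rule one_diff_power_eq[symmetric])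
  then have "c * s = (1 - b ^ t) / (1 - b ^ t)" unfolding c_def by (metis times_divide_eq_left)
  also have "\<dots> = 1" using assms by simp
  finally have "c * s = 1" .
  have "(1 / (1 - b ^ t)) *\<^sub>R ((1 - b) *\<^sub>R (\<Sum>j<t. b ^ j *\<^sub>R g j)) - g 0
      = c *\<^sub>R (\<Sum>j<t. b ^ j *\<^sub>R g j) - (c * s) *\<^sub>R g 0"
    by (simp only: \<open>c * s = 1\<close> scaleR_one) (simp add: c_def)
  also have "\<dots> = c *\<^sub>R (\<Sum>j<t. b ^ j *\<^sub>R (g j - g 0))"
    by (simp add: s_def scaleR_diff_right sum_subtractf scaleR_sum_left[symmetric])
  finally show ?thesis unfolding c_def .
qed

lemma norm_diff_le_of_steps_le_inverse_sqrt:
  fixes x :: "nat \<Rightarrow> 'a::real_normed_vector"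
  assumes step: "\<And>k. norm (x (Suc k) - x k) \<le> c / sqrt (real (Suc k))"
    and "0 \<le> c" "j < t"
  shows "norm (x (t - 1) - x (t - 1 - j)) \<le> real j * (real j + 1) * c / sqrt (real t)"
proof -
  have "norm (x (t - 1) - x (t - 1 - j)) \<le> (\<Sum>k = t - 1 - j..<t - 1. norm (x (Suc k) - x k))"
    unfolding sum_Suc_diff'[symmetric, of "t - 1 - j" "t - 1" x, OF diff_le_self] by (rule norm_sum)
  also have "\<dots> \<le> (\<Sum>k = t - 1 - j..<t - 1. c / sqrt (real (t - j)))"
  proof (rule sum_mono)
    fix k assume "k \<in> {t - 1 - j..<t - 1}"
    then have "t - j \<le> Suc k" by auto
    then have "c / sqrt (real (Suc k)) \<le> c / sqrt (real (t - j))"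
      using \<open>j < t\<close> \<open>0 \<le> c\<close> by (intro divide_left_mono) auto
    then show "norm (x (Suc k) - x k) \<le> c / sqrt (real (t - j))" using step order_trans by blast
  qed
  also have "\<dots> = real j * c / sqrt (real (t - j))" using \<open>j < t\<close> by simp
  also have "\<dots> \<le> real j * (real j + 1) * c / sqrt (real t)"
  proof -
    have "real j * (real j + 1) \<le> real j * real t"
      using \<open>j < t\<close> by (intro mult_left_mono) auto
    then have "real t \<le> (real j + 1) * real (t - j)"
      using \<open>j < t\<close> by (simp add: of_nat_diff algebra_simps)
    then have "sqrt (real t) \<le> (real j + 1) * sqrt (real (t - j))"
      using real_sqrt_le_mono[of "real t" "(real j + 1)\<^sup>2 * real (t - j)"]
      by (simp add: real_sqrt_mult power2_eq_square order_trans mult_le_cancel_right1)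
    then have "real j * c * sqrt (real t) \<le> real j * c * ((real j + 1) * sqrt (real (t - j)))"
      using \<open>0 \<le> c\<close> by (intro mult_left_mono) auto
    then show ?thesis
      using \<open>j < t\<close> by (simp add: field_simps)
  qed
  finally show ?thesis .
qed

context
  fixes G :: "(real, 'n::{finite,linorder}) vec \<Rightarrow> (real, 'n) vec"
    and \<alpha> \<beta>1 \<beta>2 :: real and blk :: "'n \<Rightarrow> nat" and \<eta> :: "nat \<Rightarrow> real"
    and \<theta>0 :: "(real, 'n) vec"
begin

private abbreviation "theta \<equiv> mofo_theta G \<alpha> blk \<beta>1 \<beta>2 \<eta> \<theta>0"
private abbreviation "m \<equiv> mofo_m G \<alpha> blk \<beta>1 \<beta>2 \<eta> \<theta>0"
private abbreviation "v \<equiv> mofo_v G \<alpha> blk \<beta>1 \<beta>2 \<eta> \<theta>0"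

lemma mofo_eq: "mofo G \<alpha> blk \<beta>1 \<beta>2 \<eta> \<theta>0 t = (theta t, m t, v t)"
  by (simp add: mofo_theta_def mofo_m_def mofo_v_def)

lemma mofo_m_Suc: "m (Suc t) = \<beta>1 *\<^sub>R m t + (1 - \<beta>1) *\<^sub>R G (theta t)"
  unfolding mofo_m_def[where t = "Suc t"] by (simp add: Let_def mofo_eq)

lemma mofo_v_Suc:
  "v (Suc t) = \<beta>2 *\<^sub>R v t + (1 - \<beta>2) *\<^sub>R (\<chi> i. G (theta t) $ i * G (theta t) $ i)"
  unfolding mofo_v_def[where t = "Suc t"] by (simp add: Let_def mofo_eq)

lemma mofo_theta_Suc:
  "theta (Suc t) $ i = theta t $ i - \<eta> (Suc t) *
    (if ((1 / (1 - \<beta>2 ^ Suc t)) *\<^sub>R v (Suc t)) $ i = 0 then 0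
     else ((1 / (1 - \<beta>1 ^ Suc t)) *\<^sub>R m (Suc t)) $ i * flt \<alpha> blk (m (Suc t)) $ i
          / sqrt (((1 / (1 - \<beta>2 ^ Suc t)) *\<^sub>R v (Suc t)) $ i))"
  unfolding mofo_theta_def[where t = "Suc t"] mofo_m_Suc mofo_v_Suc by (simp add: Let_def mofo_eq)

lemma mofo_m_eq_sum: "m t = (1 - \<beta>1) *\<^sub>R (\<Sum>j<t. \<beta>1 ^ j *\<^sub>R G (theta (t - 1 - j)))"
proof (induction t)
  case 0
  then show ?case by (simp add: mofo_m_def)
next
  case (Suc t)
  have "(\<Sum>j<Suc t. \<beta>1 ^ j *\<^sub>R G (theta (Suc t - 1 - j)))
      = G (theta t) + \<beta>1 *\<^sub>R (\<Sum>j<t. \<beta>1 ^ j *\<^sub>R G (theta (t - 1 - j)))"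
    by (subst sum.lessThan_Suc_shift) (simp add: scaleR_sum_right)
  then show ?case by (simp add: mofo_m_Suc Suc.IH scaleR_add_right)
qed

lemma mofo_v_eq_sum: "v t $ i = (1 - \<beta>2) * (\<Sum>j<t. \<beta>2 ^ j * (G (theta (t - 1 - j)) $ i)\<^sup>2)"
proof (induction t)
  case 0
  then show ?case by (simp add: mofo_v_def)
next
  case (Suc t)
  have "(\<Sum>j<Suc t. \<beta>2 ^ j * (G (theta (Suc t - 1 - j)) $ i)\<^sup>2)
      = (G (theta t) $ i)\<^sup>2 + \<beta>2 * (\<Sum>j<t. \<beta>2 ^ j * (G (theta (t - 1 - j)) $ i)\<^sup>2)"
    by (subst sum.lessThan_Suc_shift) (simp add: sum_distrib_left mult.assoc)
  then show ?case by (simp add: mofo_v_Suc Suc.IH power2_eq_square algebra_simps)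
qed

lemma mofo_theta_step_le:
  assumes "0 \<le> \<beta>1" "\<beta>1 < sqrt \<beta>2" "\<beta>2 < 1" "\<And>i. blk i < B" "0 \<le> \<alpha>"
  shows "norm (theta (Suc t) - theta t)
    \<le> \<bar>\<eta> (Suc t)\<bar> * (sqrt (real CARD('n) * \<alpha> + real B) / (sqrt (1 - \<beta>2) * (1 - \<beta>1 / sqrt \<beta>2)))"
proof -
  define K where "K = 1 / (sqrt (1 - \<beta>2) * (1 - \<beta>1 / sqrt \<beta>2))"
  define mh where "mh i = ((1 / (1 - \<beta>1 ^ Suc t)) *\<^sub>R m (Suc t)) $ i" for i
  define vh where "vh i = ((1 / (1 - \<beta>2 ^ Suc t)) *\<^sub>R v (Suc t)) $ i" for i
  define mask where "mask = flt \<alpha> blk (m (Suc t))"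
  define \<Delta> where "\<Delta> = theta (Suc t) - theta t"
  have "0 < sqrt \<beta>2" using assms(1,2) by linarith
  then have "0 \<le> K" unfolding K_def using assms(2,3) by simp
  have "mask $ i = 0 \<or> mask $ i = 1" for i
    unfolding mask_def flt_def by simp
  then have mask01: "\<bar>mask $ i\<bar> \<le> 1" for i
    by (metis abs_zero abs_one zero_le_one order_refl)
  have ratio: "(mh i)\<^sup>2 \<le> K\<^sup>2 * vh i" for i
  proof -
    have mh: "mh i = (1 - \<beta>1) / (1 - \<beta>1 ^ Suc t) * (\<Sum>j<Suc t. \<beta>1 ^ j * G (theta (t - j)) $ i)"
      unfolding mh_def mofo_m_eq_sum[of "Suc t"] by simp
    have vh: "vh i = (1 - \<beta>2) / (1 - \<beta>2 ^ Suc t) * (\<Sum>j<Suc t. \<beta>2 ^ j * (G (theta (t - j)) $ i)\<^sup>2)"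
      unfolding vh_def vector_scaleR_component mofo_v_eq_sum[of "Suc t"] by simp
    have "1 \<le> Suc t" by simp
    from bias_corrected_moment_sq_le[OF assms(1-3) this, of "\<lambda>j. G (theta (t - j)) $ i"]
    show ?thesis unfolding mh vh K_def .
  qed
  have coord: "\<bar>\<Delta> $ i\<bar> \<le> \<bar>\<eta> (Suc t)\<bar> * (K * \<bar>mask $ i\<bar>)" for i
  proof -
    have "\<bar>\<Delta> $ i\<bar> = \<bar>\<eta> (Suc t)\<bar> * \<bar>if vh i = 0 then 0 else mh i * mask $ i / sqrt (vh i)\<bar>"
      unfolding \<Delta>_def vector_minus_component mofo_theta_Suc mh_def[symmetric] vh_def[symmetric]
        mask_def[symmetric]
      by (simp add: abs_mult)
    also have "\<dots> \<le> \<bar>\<eta> (Suc t)\<bar> * (K * \<bar>mask $ i\<bar>)"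
      by (intro mult_left_mono abs_masked_quotient_le ratio \<open>0 \<le> K\<close>) simp
    finally show ?thesis .
  qed
  have "norm \<Delta> \<le> \<bar>\<eta> (Suc t)\<bar> * K * sqrt (card {i. \<Delta> $ i \<noteq> 0})"
  proof (rule norm_le_sqrt_card_nonzero)
    fix i
    have "\<bar>\<eta> (Suc t)\<bar> * (K * \<bar>mask $ i\<bar>) \<le> \<bar>\<eta> (Suc t)\<bar> * K"
      using mult_left_mono[OF mult_left_mono[OF mask01[of i] \<open>0 \<le> K\<close>] abs_ge_zero[of "\<eta> (Suc t)"]]
      by simp
    then show "\<bar>\<Delta> $ i\<bar> \<le> \<bar>\<eta> (Suc t)\<bar> * K" using coord[of i] by linarith
  qed
  also have "\<dots> \<le> \<bar>\<eta> (Suc t)\<bar> * K * sqrt (real CARD('n) * \<alpha> + real B)"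
  proof -
    have "{i. \<Delta> $ i \<noteq> 0} \<subseteq> {i. mask $ i \<noteq> 0}"
    proof safe
      fix i assume "\<Delta> $ i \<noteq> 0" "mask $ i = 0"
      with coord[of i] show False by simp
    qed
    then have "real (card {i. \<Delta> $ i \<noteq> 0}) \<le> real (card {i. mask $ i \<noteq> 0})"
      by (simp add: card_mono)
    then have "real (card {i. \<Delta> $ i \<noteq> 0}) \<le> real CARD('n) * \<alpha> + real B"
      using card_flt_nonzero_le[where blk = blk and z = "m (Suc t)", OF assms(4,5)] unfolding mask_def by linarith
    then show ?thesis using \<open>0 \<le> K\<close> by (intro mult_left_mono real_sqrt_le_mono) auto
  qed
  finally show ?thesis unfolding \<Delta>_def K_def by simp
qed

lemma mofo_momentum_error_le:
  assumes lip: "Lc-lipschitz_on UNIV G" and "0 < \<beta>1" "\<beta>1 < 1" "1 \<le> t" "0 \<le> D"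
    and drift: "\<And>j. j < t \<Longrightarrow> norm (theta (t - 1) - theta (t - 1 - j)) \<le> real j * (real j + 1) * D"
  shows "norm ((1 / (1 - \<beta>1 ^ t)) *\<^sub>R m t - G (theta (t - 1))) \<le> 2 * \<beta>1 * Lc * D / (1 - \<beta>1)\<^sup>2"
proof -
  define g where "g j = G (theta (t - 1 - j))" for j
  define c where "c = (1 - \<beta>1) / (1 - \<beta>1 ^ t)"
  have "0 < 1 - \<beta>1 ^ t" using assms(2-4) by (simp add: power_less_one_iff)
  then have "0 \<le> c" unfolding c_def using assms(3) by simp
  have "0 \<le> Lc" using lip by (rule lipschitz_on_nonneg)
  have "(1 / (1 - \<beta>1 ^ t)) *\<^sub>R m t - G (theta (t - 1)) = c *\<^sub>R (\<Sum>j<t. \<beta>1 ^ j *\<^sub>R (g j - g 0))"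
    unfolding mofo_m_eq_sum c_def g_def
    using bias_corrected_ema_minus_head[of \<beta>1 t "\<lambda>j. G (theta (t - 1 - j))"] \<open>0 < 1 - \<beta>1 ^ t\<close>
    by simp
  also have "norm \<dots> \<le> c * (\<Sum>j<t. \<beta>1 ^ j * norm (g j - g 0))"
  proof -
    have "norm (\<Sum>j<t. \<beta>1 ^ j *\<^sub>R (g j - g 0)) \<le> (\<Sum>j<t. \<beta>1 ^ j * norm (g j - g 0))"
      using norm_sum[of "\<lambda>j. \<beta>1 ^ j *\<^sub>R (g j - g 0)" "{..<t}"] assms(2) by simp
    then show ?thesis
      unfolding norm_scaleR abs_of_nonneg[OF \<open>0 \<le> c\<close>] by (rule mult_left_mono[OF _ \<open>0 \<le> c\<close>])
  qed
  also have "\<dots> \<le> c * (\<Sum>j<t. \<beta>1 ^ j * (Lc * (real j * (real j + 1) * D)))"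
  proof (rule mult_left_mono[OF sum_mono \<open>0 \<le> c\<close>])
    fix j assume "j \<in> {..<t}"
    have "norm (g j - g 0) \<le> Lc * dist (theta (t - 1 - j)) (theta (t - 1))"
      unfolding g_def dist_norm[symmetric] using lipschitz_onD[OF lip] by simp
    also have "\<dots> \<le> Lc * (real j * (real j + 1) * D)"
      using drift[of j] \<open>j \<in> {..<t}\<close> \<open>0 \<le> Lc\<close>
      by (intro mult_left_mono) (auto simp: dist_norm norm_minus_commute)
    finally show "\<beta>1 ^ j * norm (g j - g 0) \<le> \<beta>1 ^ j * (Lc * (real j * (real j + 1) * D))"
      by (rule mult_left_mono) (use assms(2) in simp)
  qed
  also have "\<dots> = Lc * D * (c * (\<Sum>j<t. real j * (real j + 1) * \<beta>1 ^ j))"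
    by (simp add: sum_distrib_left mult_ac)
  also have "\<dots> \<le> Lc * D * (2 * \<beta>1 / (1 - \<beta>1)\<^sup>2)"
    unfolding c_def using pronic_power_sum_le[OF assms(2-4)] \<open>0 \<le> Lc\<close> \<open>0 \<le> D\<close>
    by (intro mult_left_mono) auto
  finally show ?thesis by (simp add: mult_ac)
qed

end

theorem lemma5:
  fixes \<L> :: "(real, 'n::{finite,linorder}) vec \<Rightarrow> real"
    and G :: "(real, 'n) vec \<Rightarrow> (real, 'n) vec"
    and Lc \<alpha> \<beta>1 \<beta>2 \<eta> :: real
    and B :: nat and blk :: "'n \<Rightarrow> nat"
    and \<theta>0 :: "(real, 'n) vec" and t :: nat
  assumes grad: "\<And>x. (\<L> has_derivative (\<lambda>h. G x \<bullet> h)) (at x)"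
    and lip: "Lc-lipschitz_on UNIV G"
    and blocks: "\<And>i. blk i < B"
    and blocks_nonempty: "\<And>k. k < B \<Longrightarrow> \<exists>i. blk i = k"
    and alpha: "0 < \<alpha>" "\<alpha> \<le> 1"
    and beta: "0 < \<beta>1" "\<beta>1 < sqrt \<beta>2" "0 < \<beta>2" "\<beta>2 < 1"
    and eta: "0 < \<eta>"
    and t: "1 \<le> t"
  shows "let d = real CARD('n);
             \<eta>s = (\<lambda>s. \<eta> / sqrt (real s));
             m = mofo_m G \<alpha> blk \<beta>1 \<beta>2 \<eta>s \<theta>0 t;
             g = G (mofo_theta G \<alpha> blk \<beta>1 \<beta>2 \<eta>s \<theta>0 (t - 1));
             C = sqrt (d * \<alpha> + real B) / (sqrt (1 - \<beta>2) * (1 - \<beta>1 / sqrt \<beta>2))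
         in norm1 ((1 / (1 - \<beta>1 ^ t)) *\<^sub>R m - g)
            \<le> 2 * sqrt 2 * \<beta>1 * sqrt d * Lc * C * \<eta> / ((1 - \<beta>1)\<^sup>2 * sqrt (real t))"
proof -
  define d where "d = real CARD('n)"
  define \<eta>s where "\<eta>s = (\<lambda>s::nat. \<eta> / sqrt (real s))"
  define C where "C = sqrt (d * \<alpha> + real B) / (sqrt (1 - \<beta>2) * (1 - \<beta>1 / sqrt \<beta>2))"
  define \<theta> where "\<theta> = mofo_theta G \<alpha> blk \<beta>1 \<beta>2 \<eta>s \<theta>0"
  define err where "err = (1 / (1 - \<beta>1 ^ t)) *\<^sub>R mofo_m G \<alpha> blk \<beta>1 \<beta>2 \<eta>s \<theta>0 t - G (\<theta> (t - 1))"
  have "sqrt \<beta>2 < 1" using beta(4) by simp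
  then have "\<beta>1 < 1" using beta(2) by linarith
  have "0 \<le> C" unfolding C_def d_def using alpha beta by (simp add: divide_less_eq)
  have "0 \<le> Lc" using lip by (rule lipschitz_on_nonneg)
  define D where "D = \<eta> * C / sqrt (real t)"
  have "0 \<le> D" unfolding D_def using eta \<open>0 \<le> C\<close> by simp
  have step: "norm (\<theta> (Suc k) - \<theta> k) \<le> \<eta> * C / sqrt (real (Suc k))" for k
    using mofo_theta_step_le[where \<eta> = \<eta>s and ?\<theta>0.0 = \<theta>0 and t = k,
        OF less_imp_le[OF beta(1)] beta(2,4) blocks less_imp_le[OF alpha(1)]] eta
    unfolding \<theta>_def \<eta>s_def C_def d_def by (simp add: mult.commute)
  have drift: "norm (\<theta> (t - 1) - \<theta> (t - 1 - j)) \<le> real j * (real j + 1) * D" if "j < t" for j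
    using norm_diff_le_of_steps_le_inverse_sqrt[OF step _ that] eta \<open>0 \<le> C\<close> unfolding D_def by simp
  have "norm err \<le> 2 * \<beta>1 * Lc * D / (1 - \<beta>1)\<^sup>2"
    unfolding err_def \<theta>_def
    by (rule mofo_momentum_error_le[OF lip beta(1) \<open>\<beta>1 < 1\<close> t \<open>0 \<le> D\<close>]) (fact drift[unfolded \<theta>_def])
  then have "norm1 err \<le> sqrt d * (2 * \<beta>1 * Lc * D / (1 - \<beta>1)\<^sup>2)"
    using norm1_le_sqrt_card_mult_norm[of err] unfolding d_def
    by (meson mult_left_mono order_trans real_sqrt_ge_zero of_nat_0_le_iff)
  also have "\<dots> = 2 * \<beta>1 * sqrt d * Lc * C * \<eta> / ((1 - \<beta>1)\<^sup>2 * sqrt (real t))"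
    unfolding D_def by (simp add: field_simps)
  also have "\<dots> \<le> sqrt 2 * (2 * \<beta>1 * sqrt d * Lc * C * \<eta> / ((1 - \<beta>1)\<^sup>2 * sqrt (real t)))"
    using beta eta \<open>0 \<le> C\<close> \<open>0 \<le> Lc\<close> unfolding d_def
    by (intro mult_right_mono[of 1 "sqrt 2", simplified]) simp_all
  finally show ?thesis
    unfolding Let_def d_def[symmetric] \<eta>s_def[symmetric] C_def[symmetric] \<theta>_def[symmetric]
      err_def[symmetric]
    by (simp add: mult_ac)
qed

end
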